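(* Let $\Sigma$ be a finite alphabet and $C:\Sigma^k\to\Sigma^n$ a $(q,\delta,1,s)$-relaxed locally decodable code whose relaxed decoder is nonadaptive of the following form: for each $i\in[k]$ there is a probability distribution $\mathcal{Q}_i$ over $q$-element subsets of $[n]$ and, for each $Q\in\mathrm{supp}(\mathcal{Q}_i)$, a function $f_{i,Q}:\Sigma^Q\to\Sigma\cup\{\bot\}$; on input $y\in\Sigma^n$ and $i$, the decoder samples $Q\sim\mathcal{Q}_i$ and outputs $f_{i,Q}(y|_Q)$. Fix any $r\in\bigl(0,\frac{\delta(|\Sigma|-1)}{q|\Sigma|}(1-s|\Sigma|^q)\bigr)$. Define the decoder $\mathsf{Dec}'$ which, given oracle access to $y\in\Sigma^n$ and $i\in[k]$, samples $Q\sim\mathcal{Q}_i$ and outputs $g_{i,Q}(y|_Q)$ (with $g_{i,Q}$ as defined in the context). Then $\mathsf{Dec}'$ makes at most $q$ queries, and $C$ is a $(q,r,\varepsilon)$-locally decodable code with respect to $\mathsf{Dec}'$, where $\varepsilon=s|\Sigma|^{q}\bigl(1-\frac{1}{|\Sigma|}\bigr)+\frac{rq}{\delta}$.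
   Context: $\Delta(x,y)$ denotes Hamming distance on $\Sigma^n$; for $S\subseteq[n]$, $x|_S$ is the restriction of $x$ to coordinates in $S$. $C$ is a $(q,\delta,c,s)$-RLDC if there is a $q$-query decoder with outputs in $\Sigma\cup\{\bot\}$ such that for all $b\in\Sigma^k$, $i\in[k]$, $y$ with $\Delta(y,C(b))\le\delta n$: $\Pr[\mathsf{Dec}^{C(b)}(i)=b_i]\ge c$ and $\Pr[\mathsf{Dec}^y(i)\notin\{b_i,\bot\}]\le s$; here $c=1$. $C$ is a $(q,r,\varepsilon)$-LDC with respect to a $q$-query decoder $\mathsf{Dec}'$ with outputs in $\Sigma$ if for all $b$, $i$, and $y$ with $\Delta(y,C(b))\le rn$, $\Pr[\mathsf{Dec}'^y(i)\ne b_i]\le\varepsilon$. Heavy/light coordinates: $p_i(j):=\Pr_{Q\sim\mathcal{Q}_i}[j\in Q]$, $H_i:=\{j\in[n]:p_i(j)>q/(\delta n)\}$, $L_i:=[n]\setminus H_i$, and $L(Q):=Q\cap L_i$. For a light pattern $a\in\Sigma^{L(Q)}$, call $a$ good if there is a unique $\sigma\in\Sigma$ such that some $z\in\Sigma^Q$ with $z|_{L(Q)}=a$ has $f_{i,Q}(z)=\sigma$ (i.e., among all completions $z$ of $a$, $f_{i,Q}$ takes at least one non-$\bot$ value and all its non-$\bot$ values equal $\sigma$); otherwise $a$ is bad (either two completions give two different non-$\bot$ values, or all completions give $\bot$). For $\ell\in\Sigma^Q$ with $a=\ell|_{L(Q)}$: if $a$ is good, $g_{i,Q}(\ell):=\sigma$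 for the associated $\sigma$; if $a$ is bad, $g_{i,Q}(\ell)$ is a fresh uniformly random symbol of $\Sigma$. *)

theory Defs
  imports "HOL-Probability.Probability"
begin

text \<open>Coordinates of [n] are {0..<n}; words in Sigma^m are extensional functions
  on {..<m}. The symbol bot is modelled by None in 'a option.\<close>

definition words :: "nat \<Rightarrow> (nat \<Rightarrow> 'a) set" where
  "words m = PiE {..<m} (\<lambda>_. UNIV)"

definition hdist :: "nat \<Rightarrow> (nat \<Rightarrow> 'a) \<Rightarrow> (nat \<Rightarrow> 'a) \<Rightarrow> nat" where
  "hdist n x y = card {j\<in>{..<n}. x j \<noteq> y j}"

definition rdec :: "(nat \<Rightarrow> nat set pmf) \<Rightarrow> (nat \<Rightarrow> nat set \<Rightarrow> (nat \<Rightarrow> 'a) \<Rightarrow> 'a option)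
    \<Rightarrow> (nat \<Rightarrow> 'a) \<Rightarrow> nat \<Rightarrow> 'a option pmf" where
  "rdec Qd f y i = map_pmf (\<lambda>Q. f i Q (restrict y Q)) (Qd i)"

definition is_RLDC :: "nat \<Rightarrow> nat \<Rightarrow> ((nat \<Rightarrow> 'a) \<Rightarrow> nat \<Rightarrow> 'a) \<Rightarrow> real \<Rightarrow> real \<Rightarrow> real
    \<Rightarrow> ((nat \<Rightarrow> 'a) \<Rightarrow> nat \<Rightarrow> 'a option pmf) \<Rightarrow> bool" where
  "is_RLDC k n C \<delta> c s Dec \<longleftrightarrow>
     (\<forall>b\<in>words k. \<forall>i<k. \<forall>y\<in>words n. real (hdist n y (C b)) \<le> \<delta> * real n \<longrightarrow>
        measure_pmf.prob (Dec (C b) i) {Some (b i)} \<ge> c \<and>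
        measure_pmf.prob (Dec y i) (- {Some (b i), None}) \<le> s)"

definition is_LDC :: "nat \<Rightarrow> nat \<Rightarrow> ((nat \<Rightarrow> 'a) \<Rightarrow> nat \<Rightarrow> 'a) \<Rightarrow> real \<Rightarrow> real
    \<Rightarrow> ((nat \<Rightarrow> 'a) \<Rightarrow> nat \<Rightarrow> 'a pmf) \<Rightarrow> bool" where
  "is_LDC k n C r \<epsilon> Dec' \<longleftrightarrow>
     (\<forall>b\<in>words k. \<forall>i<k. \<forall>y\<in>words n. real (hdist n y (C b)) \<le> r * real n \<longrightarrow>
        measure_pmf.prob (Dec' y i) {x. x \<noteq> b i} \<le> \<epsilon>)"

definition pq :: "(nat \<Rightarrow> nat set pmf) \<Rightarrow> nat \<Rightarrow> nat \<Rightarrow> real" where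
  "pq Qd i j = measure_pmf.prob (Qd i) {Q. j \<in> Q}"

definition heavy :: "nat \<Rightarrow> nat \<Rightarrow> real \<Rightarrow> (nat \<Rightarrow> nat set pmf) \<Rightarrow> nat \<Rightarrow> nat set" where
  "heavy n q \<delta> Qd i = {j\<in>{..<n}. pq Qd i j > real q / (\<delta> * real n)}"

definition light :: "nat \<Rightarrow> nat \<Rightarrow> real \<Rightarrow> (nat \<Rightarrow> nat set pmf) \<Rightarrow> nat \<Rightarrow> nat set" where
  "light n q \<delta> Qd i = {..<n} - heavy n q \<delta> Qd i"

definition completes_to :: "(nat \<Rightarrow> nat set \<Rightarrow> (nat \<Rightarrow> 'a) \<Rightarrow> 'a option) \<Rightarrow> nat \<Rightarrow> nat set
    \<Rightarrow> nat set \<Rightarrow> (nat \<Rightarrow> 'a) \<Rightarrow> 'a \<Rightarrow> bool" where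
  "completes_to f i Q LQ a \<sigma> \<longleftrightarrow>
     (\<exists>z\<in>PiE Q (\<lambda>_. UNIV). restrict z LQ = a \<and> f i Q z = Some \<sigma>)"

text \<open>g_{i,Q}(y|_Q) as a distribution: the associated sigma if the light pattern is good,
  otherwise a fresh uniformly random symbol.\<close>
definition gdec :: "nat \<Rightarrow> nat \<Rightarrow> real \<Rightarrow> (nat \<Rightarrow> nat set pmf)
    \<Rightarrow> (nat \<Rightarrow> nat set \<Rightarrow> (nat \<Rightarrow> 'a::finite) \<Rightarrow> 'a option) \<Rightarrow> nat \<Rightarrow> nat set \<Rightarrow> (nat \<Rightarrow> 'a) \<Rightarrow> 'a pmf" where
  "gdec n q \<delta> Qd f i Q y =
     (let LQ = Q \<inter> light n q \<delta> Qd i; a = restrict y LQ in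
      if (\<exists>!\<sigma>. completes_to f i Q LQ a \<sigma>)
      then return_pmf (THE \<sigma>. completes_to f i Q LQ a \<sigma>)
      else pmf_of_set UNIV)"

definition dec' :: "nat \<Rightarrow> nat \<Rightarrow> real \<Rightarrow> (nat \<Rightarrow> nat set pmf)
    \<Rightarrow> (nat \<Rightarrow> nat set \<Rightarrow> (nat \<Rightarrow> 'a::finite) \<Rightarrow> 'a option) \<Rightarrow> (nat \<Rightarrow> 'a) \<Rightarrow> nat \<Rightarrow> 'a pmf" where
  "dec' n q \<delta> Qd f y i = bind_pmf (Qd i) (\<lambda>Q. gdec n q \<delta> Qd f i Q y)"

end

theory Submission
  imports Defs
begin

text \<open>Fix a codeword x = C b and a word y with d(y, x) \<le> r n. Unless Q meets a light coordinate
  where y and x differ, g sees the same light pattern on y as on x; by perfect completeness x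
  itself decodes to b i, so then g errs only if the light pattern of x on Q is bad, and even
  then only with probability 1 - 1/|\<Sigma>|. As the p i j sum to q, at most \<delta> n coordinates are
  heavy, and a union bound over the light disagreements bounds the first event by r q / \<delta>.
  For the second, every rewriting of x on the heavy coordinates lies within distance \<delta> n of x,
  so relaxed soundness bounds its decoding error by s; a bad Q errs on at least a
  |\<Sigma>|^-q fraction of these rewritings, hence Q is bad with probability at most s |\<Sigma>|^q.\<close>

lemma measure_bind_pmf_le_indicators:
  fixes p :: "'a pmf" and g :: "'a \<Rightarrow> 'b pmf"
  assumes "0 \<le> c"
    and "\<And>x. x \<in> set_pmf p \<Longrightarrow> measure_pmf.prob (g x) B \<le> indicator A x + c * indicator A' x"
  shows "measure_pmf.prob (bind_pmf p g) B \<le> measure_pmf.prob p A + c * measure_pmf.prob p A'"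
proof -
  have "measure_pmf.prob (bind_pmf p g) B = measure_pmf.expectation p (\<lambda>x. measure_pmf.prob (g x) B)"
    unfolding measure_pmf_bind
    by (rule measure_pmf.measure_bind)
       (auto simp: space_subprob_algebra intro!: prob_space_imp_subprob_space prob_space_measure_pmf)
  also have "\<dots> \<le> measure_pmf.expectation p (\<lambda>x. indicator A x + c * indicator A' x)"
    using assms
    by (intro integral_mono_AE measure_pmf.integrable_const_bound[where B=1]
          measure_pmf.integrable_const_bound[where B="1 + c"])
       (auto simp: AE_measure_pmf_iff indicator_def)
  also have "\<dots> = measure_pmf.prob p A + c * measure_pmf.prob p A'"
    by (simp add: measure_pmf.integrable_const_bound[where B=1])
  finally show ?thesis .
qed

lemma prob_le_by_averaging:
  fixes p :: "'a pmf" and B :: "'i \<Rightarrow> 'a set" and m s :: real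
  assumes "finite D" "0 < m"
    and "\<And>h. h \<in> D \<Longrightarrow> measure_pmf.prob p (B h) \<le> s"
    and "\<And>x. x \<in> set_pmf p \<Longrightarrow> x \<in> U \<Longrightarrow> m \<le> real (card {h \<in> D. x \<in> B h})"
  shows "measure_pmf.prob p U \<le> real (card D) * s / m"
proof -
  have cnt_eq: "(\<Sum>h\<in>D. indicator (B h) x) = real (card {h \<in> D. x \<in> B h})" for x
    using \<open>finite D\<close> by (simp add: indicator_def sum.If_cases Int_def)
  have indicator_integrable: "integrable p (indicator A :: _ \<Rightarrow> real)" for A
    by (rule measure_pmf.integrable_const_bound[where B=1]) auto
  have "m * measure_pmf.prob p U = measure_pmf.expectation p (\<lambda>x. m * indicator U x)"
    by simp
  also have "\<dots> \<le> measure_pmf.expectation p (\<lambda>x. \<Sum>h\<in>D. indicator (B h) x)"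
  proof (intro integral_mono_AE integrable_mult_right indicator_integrable)
    show "integrable p (\<lambda>x. \<Sum>h\<in>D. indicator (B h) x :: real)"
      using indicator_integrable by auto
    have "m * indicator U x \<le> (\<Sum>h\<in>D. indicator (B h) x)" if "x \<in> set_pmf p" for x
      using assms(4)[OF that] by (cases "x \<in> U") (simp_all add: cnt_eq)
    then show "AE x in p. m * indicator U x \<le> (\<Sum>h\<in>D. indicator (B h) x)"
      by (simp add: AE_measure_pmf_iff)
  qed
  also have "\<dots> = (\<Sum>h\<in>D. measure_pmf.prob p (B h))"
    by (simp add: indicator_integrable)
  also have "\<dots> \<le> card D * s"
    using sum_bounded_above[of D "\<lambda>h. measure_pmf.prob p (B h)" s] assms(3) by simp
  finally show ?thesis
    using \<open>0 < m\<close> by (simp add: field_simps)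
qed

lemma sum_prob_mem_eq:
  fixes p :: "'a set pmf"
  assumes "finite N" and "\<And>Q. Q \<in> set_pmf p \<Longrightarrow> Q \<subseteq> N \<and> card Q = m"
  shows "(\<Sum>j\<in>N. measure_pmf.prob p {Q. j \<in> Q}) = real m"
proof -
  have "(\<Sum>j\<in>N. measure_pmf.prob p {Q. j \<in> Q})
      = measure_pmf.expectation p (\<lambda>Q. \<Sum>j\<in>N. indicator {Q. j \<in> Q} Q)"
    by (simp add: measure_pmf.integrable_const_bound[where B=1])
  also have "\<dots> = measure_pmf.expectation p (\<lambda>_. real m)"
  proof (rule integral_cong_AE)
    show "AE Q in p. (\<Sum>j\<in>N. indicator {Q. j \<in> Q} Q) = real m"
      using assms by (auto simp: AE_measure_pmf_iff indicator_def sum.If_cases Int_absorb1)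
  qed auto
  finally show ?thesis
    by simp
qed

lemma card_overrides_agreeing_on:
  fixes x z :: "'b \<Rightarrow> 'a::finite"
  assumes "finite H" "z \<in> PiE Q (\<lambda>_. UNIV)" "restrict z (Q - H) = restrict x (Q - H)"
  shows "card {h \<in> PiE H (\<lambda>_. UNIV). restrict (override_on x h H) Q = z} = CARD('a) ^ card (H - Q)"
proof -
  have "{h \<in> PiE H (\<lambda>_. UNIV). restrict (override_on x h H) Q = z}
      = PiE H (\<lambda>j. if j \<in> Q then {z j} else UNIV)"
  proof (intro set_eqI iffI)
    fix h
    assume "h \<in> {h \<in> PiE H (\<lambda>_. UNIV). restrict (override_on x h H) Q = z}"
    then have "h \<in> extensional H" "\<forall>j \<in> H \<inter> Q. h j = z j"
      by (auto simp: PiE_iff dest: fun_cong)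
    then show "h \<in> PiE H (\<lambda>j. if j \<in> Q then {z j} else UNIV)"
      by (auto simp: PiE_iff)
  next
    fix h
    assume h: "h \<in> PiE H (\<lambda>j. if j \<in> Q then {z j} else UNIV)"
    have "restrict (override_on x h H) Q j = z j" for j
      using h fun_cong[OF assms(3), of j] PiE_arb[OF assms(2), of j] PiE_mem[OF h, of j]
      by (cases "j \<in> Q"; cases "j \<in> H") (simp_all add: override_on_def)
    with h show "h \<in> {h \<in> PiE H (\<lambda>_. UNIV). restrict (override_on x h H) Q = z}"
      by (auto simp: PiE_iff)
  qed
  also have "card \<dots> = (\<Prod>j\<in>H. card (if j \<in> Q then {z j} else UNIV))"
    using \<open>finite H\<close> by (rule card_PiE)
  also have "\<dots> = (\<Prod>j\<in>H. if j \<in> Q then 1 else CARD('a))"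
    by (rule prod.cong) auto
  also have "\<dots> = CARD('a) ^ card (H - Q)"
    using \<open>finite H\<close> by (simp add: prod.If_cases Diff_eq)
  finally show ?thesis .
qed

lemma card_overrides_satisfying_ge:
  fixes x z :: "'b \<Rightarrow> 'a::finite"
  assumes "finite H" "finite Q" "z \<in> PiE Q (\<lambda>_. UNIV)" "restrict z (Q - H) = restrict x (Q - H)" "P z"
  shows "CARD('a) ^ card H
           \<le> CARD('a) ^ card Q * card {h \<in> PiE H (\<lambda>_. UNIV). P (restrict (override_on x h H) Q)}"
proof -
  define D where "D = PiE H (\<lambda>_. UNIV :: 'a set)"
  have "finite D"
    using \<open>finite H\<close> by (simp add: D_def finite_PiE)
  have "{h \<in> D. restrict (override_on x h H) Q = z} \<subseteq> {h \<in> D. P (restrict (override_on x h H) Q)}"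
    using \<open>P z\<close> by auto
  then have "card {h \<in> D. restrict (override_on x h H) Q = z} \<le> card {h \<in> D. P (restrict (override_on x h H) Q)}"
    using \<open>finite D\<close> by (intro card_mono) auto
  then have "CARD('a) ^ card (H - Q) \<le> card {h \<in> D. P (restrict (override_on x h H) Q)}"
    unfolding D_def card_overrides_agreeing_on[OF assms(1,3,4)] .
  moreover have "card H \<le> card Q + card (H - Q)"
    using card_Int_Diff[OF \<open>finite H\<close>, of Q] card_mono[OF \<open>finite Q\<close>, of "H \<inter> Q"] by auto
  then have "CARD('a) ^ card H \<le> CARD('a) ^ card Q * CARD('a) ^ card (H - Q)"
    by (simp add: power_add[symmetric] power_increasing)
  ultimately show ?thesis
    unfolding D_def by (meson mult_le_mono2 order_trans)
qed

lemma prob_exists_unsound_completion_le: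
  fixes p :: "'b set pmf" and F :: "'b set \<Rightarrow> ('b \<Rightarrow> 'a::finite) \<Rightarrow> 'a option"
  assumes "finite H"
    and supp: "\<And>Q. Q \<in> set_pmf p \<Longrightarrow> finite Q \<and> card Q \<le> q"
    and sound: "\<And>h. h \<in> PiE H (\<lambda>_. UNIV) \<Longrightarrow>
       measure_pmf.prob p {Q. F Q (restrict (override_on x h H) Q) \<notin> {Some \<sigma>, None}} \<le> s"
  shows "measure_pmf.prob p {Q. \<exists>z\<in>PiE Q (\<lambda>_. UNIV).
            restrict z (Q - H) = restrict x (Q - H) \<and> F Q z \<notin> {Some \<sigma>, None}} \<le> s * real CARD('a) ^ q"
proof -
  define c where "c = real CARD('a)"
  define D where "D = PiE H (\<lambda>_. UNIV :: 'a set)"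
  define B where "B h = {Q. F Q (restrict (override_on x h H) Q) \<notin> {Some \<sigma>, None}}" for h
  have "c \<ge> 1"
    by (simp add: c_def Suc_leI)
  have "finite D" "card D = c ^ card H"
    using \<open>finite H\<close> by (simp_all add: D_def c_def finite_PiE card_PiE)
  have "measure_pmf.prob p {Q. \<exists>z\<in>PiE Q (\<lambda>_. UNIV).
            restrict z (Q - H) = restrict x (Q - H) \<and> F Q z \<notin> {Some \<sigma>, None}}
      \<le> card D * s / (c ^ card H / c ^ q)"
  proof (rule prob_le_by_averaging[OF \<open>finite D\<close>])
    show "0 < c ^ card H / c ^ q"
      using \<open>c \<ge> 1\<close> by simp
    show "measure_pmf.prob p (B h) \<le> s" if "h \<in> D" for h
      using sound that by (simp add: B_def D_def)
    fix Q
    assume "Q \<in> set_pmf p" "Q \<in> {Q. \<exists>z\<in>PiE Q (\<lambda>_. UNIV).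
            restrict z (Q - H) = restrict x (Q - H) \<and> F Q z \<notin> {Some \<sigma>, None}}"
    then obtain z where z: "z \<in> PiE Q (\<lambda>_. UNIV)"
      "restrict z (Q - H) = restrict x (Q - H)" "F Q z \<notin> {Some \<sigma>, None}"
      by auto
    have "CARD('a) ^ card H \<le> CARD('a) ^ card Q * card {h \<in> D. Q \<in> B h}"
      using card_overrides_satisfying_ge[where P="\<lambda>w. F Q w \<notin> {Some \<sigma>, None}",
          OF \<open>finite H\<close> _ z] supp[OF \<open>Q \<in> set_pmf p\<close>]
      by (simp add: B_def D_def)
    then have "c ^ card H \<le> c ^ card Q * card {h \<in> D. Q \<in> B h}"
      unfolding c_def of_nat_power[symmetric] of_nat_mult[symmetric] of_nat_le_iff .
    also have "\<dots> \<le> c ^ q * card {h \<in> D. Q \<in> B h}"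
      using supp[OF \<open>Q \<in> set_pmf p\<close>] \<open>c \<ge> 1\<close> by (intro mult_right_mono power_increasing) simp_all
    finally show "c ^ card H / c ^ q \<le> card {h \<in> D. Q \<in> B h}"
      using \<open>c \<ge> 1\<close> by (simp add: field_simps)
  qed
  also have "\<dots> = s * c ^ q"
    using \<open>c \<ge> 1\<close> by (simp add: \<open>card D = c ^ card H\<close>)
  finally show ?thesis
    by (simp add: c_def)
qed

lemma measure_rdec:
  "measure_pmf.prob (rdec Qd f y i) X = measure_pmf.prob (Qd i) {Q. f i Q (restrict y Q) \<in> X}"
  by (simp add: rdec_def vimage_def)

lemma rdec_perfectly_complete:
  assumes "is_RLDC k n C \<delta> 1 s (rdec Qd f)" "0 \<le> \<delta>"
    and "b \<in> words k" "i < k" "C b \<in> words n" "Q \<in> set_pmf (Qd i)"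
  shows "f i Q (restrict (C b) Q) = Some (b i)"
proof -
  have "measure_pmf.prob (rdec Qd f (C b) i) {Some (b i)} \<ge> 1"
    using assms(1-5) by (auto simp: is_RLDC_def hdist_def)
  then have "measure_pmf.prob (Qd i) {Q. f i Q (restrict (C b) Q) = Some (b i)} = 1"
    by (simp add: measure_rdec measure_pmf.measure_ge_1_iff)
  then have "AE Q in Qd i. f i Q (restrict (C b) Q) = Some (b i)"
    by (simp add: measure_pmf.prob_eq_1)
  with assms(6) show ?thesis
    by (simp add: AE_measure_pmf_iff)
qed

lemma card_heavy_le:
  assumes "0 < \<delta>" and "\<And>Q. Q \<in> set_pmf (Qd i) \<Longrightarrow> Q \<subseteq> {..<n} \<and> card Q = q"
  shows "real (card (heavy n q \<delta> Qd i)) \<le> \<delta> * real n"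
proof (cases "heavy n q \<delta> Qd i = {}")
  case False
  define H where "H = heavy n q \<delta> Qd i"
  have H: "H \<subseteq> {..<n}" "\<And>j. j \<in> H \<Longrightarrow> real q / (\<delta> * real n) < pq Qd i j"
    by (auto simp: H_def heavy_def)
  then have "finite H"
    using finite_subset by blast
  have "0 < n"
    using False by (auto simp: heavy_def)
  have "real (card H) * (real q / (\<delta> * real n)) < (\<Sum>j\<in>H. pq Qd i j)"
    using sum_strict_mono[OF \<open>finite H\<close> False[folded H_def] H(2)] by simp
  also have "\<dots> \<le> (\<Sum>j<n. pq Qd i j)"
    by (rule sum_mono2) (use H in \<open>auto simp: pq_def\<close>)
  also have "\<dots> = real q"
    unfolding pq_def by (rule sum_prob_mem_eq) (use assms(2) in auto)
  finally have "real (card H) * real q < \<delta> * real n * real q"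
    using \<open>0 < \<delta>\<close> \<open>0 < n\<close> by (simp add: field_simps)
  then show ?thesis
    unfolding H_def by (simp add: mult_less_cancel_right)
qed (use assms(1) in simp)

lemma prob_light_disagreement_le:
  assumes "0 < \<delta>"
  shows "measure_pmf.prob (Qd i) {Q. \<exists>j\<in>Q \<inter> light n q \<delta> Qd i. y j \<noteq> x j}
           \<le> real (hdist n y x) * real q / (\<delta> * real n)"
proof -
  define T where "T = {j \<in> light n q \<delta> Qd i. y j \<noteq> x j}"
  have "T \<subseteq> {j \<in> {..<n}. y j \<noteq> x j}"
    by (auto simp: T_def light_def)
  then have "finite T" "card T \<le> hdist n y x"
    unfolding hdist_def by (auto intro: finite_subset card_mono)
  have "{Q. \<exists>j\<in>Q \<inter> light n q \<delta> Qd i. y j \<noteq> x j} = (\<Union>j\<in>T. {Q. j \<in> Q})"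
    by (auto simp: T_def)
  then have "measure_pmf.prob (Qd i) {Q. \<exists>j\<in>Q \<inter> light n q \<delta> Qd i. y j \<noteq> x j}
      \<le> (\<Sum>j\<in>T. pq Qd i j)"
    unfolding pq_def using \<open>finite T\<close> by (simp add: measure_pmf.finite_measure_subadditive_finite)
  also have "\<dots> \<le> (\<Sum>j\<in>T. real q / (\<delta> * real n))"
    by (rule sum_mono) (auto simp: T_def light_def heavy_def)
  also have "\<dots> = real (card T) * (real q / (\<delta> * real n))"
    by simp
  also have "\<dots> \<le> real (hdist n y x) * (real q / (\<delta> * real n))"
    using \<open>0 < \<delta>\<close> \<open>card T \<le> hdist n y x\<close> by (intro mult_right_mono) auto
  finally show ?thesis
    by simp
qed

lemma gdec_cong_light:
  assumes "restrict y (Q \<inter> light n q \<delta> Qd i) = restrict y' (Q \<inter> light n q \<delta> Qd i)"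
  shows "gdec n q \<delta> Qd f i Q y = gdec n q \<delta> Qd f i Q y'"
  using assms by (simp add: gdec_def Let_def)

lemma gdec_cong:
  assumes "restrict y Q = restrict y' Q"
  shows "gdec n q \<delta> Qd f i Q y = gdec n q \<delta> Qd f i Q y'"
  by (rule gdec_cong_light) (metis assms Int_commute restrict_restrict)

lemma completes_to_restrict:
  assumes "LQ \<subseteq> Q" "f i Q (restrict x Q) = Some \<sigma>"
  shows "completes_to f i Q LQ (restrict x LQ) \<sigma>"
  unfolding completes_to_def
  by (rule bexI[of _ "restrict x Q"]) (use assms in \<open>auto simp: Int_absorb1\<close>)

lemma measure_gdec_ne_eq:
  fixes f :: "nat \<Rightarrow> nat set \<Rightarrow> (nat \<Rightarrow> 'a::finite) \<Rightarrow> 'a option"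
    and n q :: nat and \<delta> :: real and Qd :: "nat \<Rightarrow> nat set pmf"
  assumes "f i Q (restrict x Q) = Some \<sigma>"
  defines "LQ \<equiv> Q \<inter> light n q \<delta> Qd i"
  shows "measure_pmf.prob (gdec n q \<delta> Qd f i Q x) {z. z \<noteq> \<sigma>}
       = (if \<exists>\<sigma>'. \<sigma>' \<noteq> \<sigma> \<and> completes_to f i Q LQ (restrict x LQ) \<sigma>'
          then 1 - 1 / real CARD('a) else 0)"
proof -
  have \<sigma>: "completes_to f i Q LQ (restrict x LQ) \<sigma>"
    using assms by (intro completes_to_restrict) auto
  show ?thesis
  proof (cases "\<exists>\<sigma>'. \<sigma>' \<noteq> \<sigma> \<and> completes_to f i Q LQ (restrict x LQ) \<sigma>'")
    case True
    then have "\<not> (\<exists>!\<sigma>. completes_to f i Q LQ (restrict x LQ) \<sigma>)"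
      using \<sigma> by blast
    then have "gdec n q \<delta> Qd f i Q x = pmf_of_set UNIV"
      by (simp add: gdec_def LQ_def)
    moreover have "card {z::'a. z \<noteq> \<sigma>} = CARD('a) - 1"
      by (simp add: Collect_neg_eq Compl_eq_Diff_UNIV card_Diff_singleton)
    ultimately show ?thesis
      using True by (simp add: measure_pmf_of_set of_nat_diff Suc_leI field_simps)
  next
    case False
    with \<sigma> have "(\<exists>!\<sigma>. completes_to f i Q LQ (restrict x LQ) \<sigma>)
      \<and> (THE \<sigma>. completes_to f i Q LQ (restrict x LQ) \<sigma>) = \<sigma>"
      by (metis the_equality)
    then have "gdec n q \<delta> Qd f i Q x = return_pmf \<sigma>"
      by (simp add: gdec_def LQ_def)
    with False show ?thesis
      by auto
  qed
qed

lemma measure_gdec_ne_le: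
  fixes f :: "nat \<Rightarrow> nat set \<Rightarrow> (nat \<Rightarrow> 'a::finite) \<Rightarrow> 'a option"
    and n q :: nat and \<delta> :: real and Qd :: "nat \<Rightarrow> nat set pmf"
  assumes "f i Q (restrict x Q) = Some \<sigma>"
  defines "LQ \<equiv> Q \<inter> light n q \<delta> Qd i"
  shows "measure_pmf.prob (gdec n q \<delta> Qd f i Q y) {z. z \<noteq> \<sigma>}
       \<le> of_bool (\<exists>j\<in>LQ. y j \<noteq> x j) + (1 - 1 / real CARD('a)) *
          of_bool (\<exists>z\<in>PiE Q (\<lambda>_. UNIV). restrict z LQ = restrict x LQ \<and> f i Q z \<notin> {Some \<sigma>, None})"
proof (cases "\<exists>j\<in>LQ. y j \<noteq> x j")
  case True
  have "measure_pmf.prob (gdec n q \<delta> Qd f i Q y) {z. z \<noteq> \<sigma>} \<le> 1"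
    by (rule measure_pmf.prob_le_1)
  with True show ?thesis
    by (simp add: add_increasing2)
next
  case False
  then have "restrict y LQ = restrict x LQ"
    by (auto simp: restrict_def)
  then have "gdec n q \<delta> Qd f i Q y = gdec n q \<delta> Qd f i Q x"
    unfolding LQ_def by (rule gdec_cong_light)
  moreover have "(\<exists>\<sigma>'. \<sigma>' \<noteq> \<sigma> \<and> completes_to f i Q LQ (restrict x LQ) \<sigma>')
      \<longleftrightarrow> (\<exists>z\<in>PiE Q (\<lambda>_. UNIV). restrict z LQ = restrict x LQ \<and> f i Q z \<notin> {Some \<sigma>, None})"
    unfolding completes_to_def by (auto simp: Int_absorb1 LQ_def)
  ultimately show ?thesis
    using measure_gdec_ne_eq[where f=f and n=n and q=q and \<delta>=\<delta> and Qd=Qd, OF assms(1)] False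
    by (simp add: LQ_def)
qed

text \<open>If f decodes C b to b i on every Q, the light pattern of C b on Q is bad exactly when
  some completion of it decodes to another symbol.\<close>
lemma prob_bad_light_pattern_le:
  fixes C :: "(nat \<Rightarrow> 'a::finite) \<Rightarrow> nat \<Rightarrow> 'a"
  assumes "0 < \<delta>"
    and supp: "\<And>Q. Q \<in> set_pmf (Qd i) \<Longrightarrow> Q \<subseteq> {..<n} \<and> card Q = q"
    and rldc: "is_RLDC k n C \<delta> 1 s (rdec Qd f)"
    and "b \<in> words k" "i < k" "C b \<in> words n"
  defines "L \<equiv> light n q \<delta> Qd i"
  shows "measure_pmf.prob (Qd i) {Q. \<exists>z\<in>PiE Q (\<lambda>_. UNIV).
           restrict z (Q \<inter> L) = restrict (C b) (Q \<inter> L) \<and> f i Q z \<notin> {Some (b i), None}}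
         \<le> s * real CARD('a) ^ q"
proof -
  define H where "H = heavy n q \<delta> Qd i"
  have "H \<subseteq> {..<n}"
    by (auto simp: H_def heavy_def)
  then have "finite H"
    by (rule finite_subset) simp
  have L_eq: "Q \<inter> L = Q - H" if "Q \<in> set_pmf (Qd i)" for Q
    using supp[OF that] by (auto simp: L_def H_def light_def)
  have "measure_pmf.prob (Qd i) {Q. \<exists>z\<in>PiE Q (\<lambda>_. UNIV).
        restrict z (Q \<inter> L) = restrict (C b) (Q \<inter> L) \<and> f i Q z \<notin> {Some (b i), None}}
      = measure_pmf.prob (Qd i) {Q. \<exists>z\<in>PiE Q (\<lambda>_. UNIV).
        restrict z (Q - H) = restrict (C b) (Q - H) \<and> f i Q z \<notin> {Some (b i), None}}"
    by (rule measure_pmf.finite_measure_eq_AE) (simp_all add: AE_measure_pmf_iff L_eq)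
  also have "\<dots> \<le> s * real CARD('a) ^ q"
  proof (rule prob_exists_unsound_completion_le[OF \<open>finite H\<close>])
    show "finite Q \<and> card Q \<le> q" if "Q \<in> set_pmf (Qd i)" for Q
      using supp[OF that] finite_subset by auto
    fix h :: "nat \<Rightarrow> 'a"
    have "override_on (C b) h H \<in> words n"
      using \<open>C b \<in> words n\<close> \<open>H \<subseteq> {..<n}\<close>
      by (auto simp: words_def PiE_iff extensional_def override_on_def)
    moreover have "hdist n (override_on (C b) h H) (C b) \<le> card H"
      unfolding hdist_def using \<open>finite H\<close> by (intro card_mono) (auto simp: override_on_def)
    moreover have "real (card H) \<le> \<delta> * real n"
      unfolding H_def by (rule card_heavy_le[OF \<open>0 < \<delta>\<close> supp])
    ultimately show "measure_pmf.prob (Qd i)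
        {Q. f i Q (restrict (override_on (C b) h H) Q) \<notin> {Some (b i), None}} \<le> s"
      using rldc assms(4,5) by (auto simp: is_RLDC_def measure_rdec Compl_eq)
  qed
  finally show ?thesis .
qed

lemma dec'_error_le:
  fixes C :: "(nat \<Rightarrow> 'a::finite) \<Rightarrow> nat \<Rightarrow> 'a"
  assumes "0 < \<delta>"
    and "\<And>Q. Q \<in> set_pmf (Qd i) \<Longrightarrow> Q \<subseteq> {..<n} \<and> card Q = q"
    and rldc: "is_RLDC k n C \<delta> 1 s (rdec Qd f)"
    and "b \<in> words k" "i < k" "C b \<in> words n"
    and "0 \<le> r" "real (hdist n y (C b)) \<le> r * real n"
  shows "measure_pmf.prob (dec' n q \<delta> Qd f y i) {z. z \<noteq> b i}
           \<le> r * real q / \<delta> + (1 - 1 / real CARD('a)) * (s * real CARD('a) ^ q)"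
proof -
  define L where "L = light n q \<delta> Qd i"
  define Disagree where "Disagree = {Q. \<exists>j\<in>Q \<inter> L. y j \<noteq> C b j}"
  define Bad where "Bad = {Q. \<exists>z\<in>PiE Q (\<lambda>_. UNIV).
    restrict z (Q \<inter> L) = restrict (C b) (Q \<inter> L) \<and> f i Q z \<notin> {Some (b i), None}}"
  have "0 \<le> 1 - 1 / real CARD('a)"
    by simp
  then have "measure_pmf.prob (dec' n q \<delta> Qd f y i) {z. z \<noteq> b i}
      \<le> measure_pmf.prob (Qd i) Disagree + (1 - 1 / real CARD('a)) * measure_pmf.prob (Qd i) Bad"
    unfolding dec'_def
  proof (rule measure_bind_pmf_le_indicators)
    fix Q assume "Q \<in> set_pmf (Qd i)"
    with rdec_perfectly_complete[OF rldc _ assms(4-6)] \<open>0 < \<delta>\<close>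
    have "f i Q (restrict (C b) Q) = Some (b i)"
      by simp
    then show "measure_pmf.prob (gdec n q \<delta> Qd f i Q y) {z. z \<noteq> b i}
        \<le> indicator Disagree Q + (1 - 1 / real CARD('a)) * indicator Bad Q"
      unfolding Disagree_def Bad_def L_def indicator_def mem_Collect_eq by (rule measure_gdec_ne_le)
  qed
  moreover have "measure_pmf.prob (Qd i) Disagree \<le> r * real q / \<delta>"
  proof -
    have "measure_pmf.prob (Qd i) Disagree \<le> real (hdist n y (C b)) * real q / (\<delta> * real n)"
      unfolding Disagree_def L_def by (rule prob_light_disagreement_le[OF \<open>0 < \<delta>\<close>])
    also have "\<dots> \<le> r * real n * real q / (\<delta> * real n)"
      using assms(8) \<open>0 < \<delta>\<close> by (intro divide_right_mono mult_right_mono) simp_all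
    also have "\<dots> \<le> r * real q / \<delta>"
      using \<open>0 \<le> r\<close> \<open>0 < \<delta>\<close> by (cases "n = 0") simp_all
    finally show ?thesis .
  qed
  moreover have "measure_pmf.prob (Qd i) Bad \<le> s * real CARD('a) ^ q"
    unfolding Bad_def L_def using assms(1-6) by (rule prob_bad_light_pattern_le)
  ultimately show ?thesis
    using \<open>0 \<le> 1 - 1 / real CARD('a)\<close> by (meson add_mono mult_left_mono order_trans)
qed

theorem mainTheorem2:
  fixes C :: "(nat \<Rightarrow> 'a::finite) \<Rightarrow> nat \<Rightarrow> 'a"
    and Qd :: "nat \<Rightarrow> nat set pmf"
    and f :: "nat \<Rightarrow> nat set \<Rightarrow> (nat \<Rightarrow> 'a) \<Rightarrow> 'a option"
    and k n q :: nat and \<delta> s r :: real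
  assumes q_pos: "q \<ge> 1"
    and delta_pos: "0 < \<delta>"
    and C_maps: "\<forall>b\<in>words k. C b \<in> words n"
    and Qd_supp: "\<forall>i<k. \<forall>Q\<in>set_pmf (Qd i). Q \<subseteq> {..<n} \<and> card Q = q"
    and rldc: "is_RLDC k n C \<delta> 1 s (rdec Qd f)"
    and r_pos: "0 < r"
    and r_lt: "r < \<delta> * (real CARD('a) - 1) / (real q * real CARD('a))
                   * (1 - s * real CARD('a) ^ q)"
  shows "(\<forall>i<k. \<forall>Q\<in>set_pmf (Qd i). card Q \<le> q \<and>
            (\<forall>y y'. restrict y Q = restrict y' Q \<longrightarrow>
                gdec n q \<delta> Qd f i Q y = gdec n q \<delta> Qd f i Q y'))
      \<and> is_LDC k n C r
          (s * real CARD('a) ^ q * (1 - 1 / real CARD('a)) + r * real q / \<delta>)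
          (dec' n q \<delta> Qd f)"
proof
  show "\<forall>i<k. \<forall>Q\<in>set_pmf (Qd i). card Q \<le> q \<and>
      (\<forall>y y'. restrict y Q = restrict y' Q \<longrightarrow> gdec n q \<delta> Qd f i Q y = gdec n q \<delta> Qd f i Q y')"
  proof (intro allI impI ballI conjI)
    fix i Q y y'
    assume "i < k" "Q \<in> set_pmf (Qd i)"
    then show "card Q \<le> q"
      using Qd_supp by simp
    show "restrict y Q = restrict y' Q \<Longrightarrow> gdec n q \<delta> Qd f i Q y = gdec n q \<delta> Qd f i Q y'"
      by (rule gdec_cong)
  qed
  show "is_LDC k n C r (s * real CARD('a) ^ q * (1 - 1 / real CARD('a)) + r * real q / \<delta>)
      (dec' n q \<delta> Qd f)"
    unfolding is_LDC_def
  proof (intro ballI allI impI)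
    fix b i y
    assume "b \<in> words k" "i < k" "y \<in> words n" "real (hdist n y (C b)) \<le> r * real n"
    with Qd_supp C_maps r_pos
    have "measure_pmf.prob (dec' n q \<delta> Qd f y i) {z. z \<noteq> b i}
        \<le> r * real q / \<delta> + (1 - 1 / real CARD('a)) * (s * real CARD('a) ^ q)"
      by (intro dec'_error_le[OF delta_pos _ rldc]) auto
    then show "measure_pmf.prob (dec' n q \<delta> Qd f y i) {z. z \<noteq> b i}
        \<le> s * real CARD('a) ^ q * (1 - 1 / real CARD('a)) + r * real q / \<delta>"
      by (simp add: algebra_simps)
  qed
qed

end
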